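(* Let $T>0$ and $0<\delta<\min\{1,T/2\}$, let $3\delta\le z\le T-3\delta$ and let $f\in C^1([0,T]\setminus\{z\})$. Define $\alpha=\ln(1/\delta^3)/\delta$, $\gamma=\frac{1}{2\sigma(\alpha\delta)}$ with $\sigma=\tanh$, and $\chi_\delta(t)=\gamma\bigl(\sigma(\alpha(t-2\delta))-\sigma(\alpha(t-T+2\delta))\bigr)$. Then $$\Bigl|\int_0^T f(t)\chi_\delta'(t)\,dt-f(2\delta)+f(T-2\delta)\Bigr|\le\Bigl(T\|f\|_{L^\infty([0,T])}+3\ln(1/\delta)\|f'\|_{L^\infty(B)}\Bigr)\frac{4\delta}{1-\delta},$$ where $B=[\delta,3\delta]\cup[T-3\delta,T-\delta]$. *)

theory Defs
  imports "HOL-Analysis.Analysis"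
begin

definition alpha_par :: "real \<Rightarrow> real" where
  "alpha_par \<delta> = ln (1 / \<delta> ^ 3) / \<delta>"

definition gamma_par :: "real \<Rightarrow> real" where
  "gamma_par \<delta> = 1 / (2 * tanh (alpha_par \<delta> * \<delta>))"

definition chi :: "real \<Rightarrow> real \<Rightarrow> real \<Rightarrow> real" where
  "chi T \<delta> t = gamma_par \<delta> *
     (tanh (alpha_par \<delta> * (t - 2 * \<delta>)) - tanh (alpha_par \<delta> * (t - T + 2 * \<delta>)))"

text \<open>Supremum norm of g over S, valued in the extended reals (may be infinite).
  For functions continuous on S (as here) it coincides with the essential supremum.\<close>
definition sup_norm_on :: "real set \<Rightarrow> (real \<Rightarrow> real) \<Rightarrow> ereal" where
  "sup_norm_on S g = (SUP t\<in>S. ereal \<bar>g t\<bar>)"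

end

theory Submission
  imports Defs
begin

(*
  chi_delta' = gamma (k_(2 delta) - k_(T - 2 delta)), where k_c t = alpha sech^2 (alpha (t - c))
  (tanh_kernel alpha c) is a positive bump of mass at most 2 on any interval, and gamma is chosen so
  that gamma k_c has mass exactly 1 on the window [c - delta, c + delta].  So the error
  integral f gamma k_c - f c splits into a window part, at most delta sup |f'| by the mean value
  theorem (z lies outside the open windows), and a part from the leaked mass 2 gamma - 1, at most
  sup |f| (2 gamma - 1) = sup |f| 2 delta^6 / (1 - delta^6).  The stated bound then follows from
  delta^6 <= T delta and 1 - delta <= ln (1 / delta).
*)

lemma has_integral_Diff_singleton_iff:
  fixes f :: "'a::euclidean_space \<Rightarrow> 'b::banach"
  shows "(f has_integral I) (S - {z}) \<longleftrightarrow> (f has_integral I) S"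
  by (rule has_integral_spike_set_eq) (auto intro: negligible_subset[of "{z}"])

lemma integrable_on_bounded_continuous_off_point:
  fixes f :: "real \<Rightarrow> real"
  assumes "continuous_on ({a..b} - {z}) f" and "\<forall>t\<in>{a..b} - {z}. \<bar>f t\<bar> \<le> M"
  shows "f integrable_on {a..b}"
proof -
  have neg: "negligible ({a..b} - ({a..b} - {z}) \<union> (({a..b} - {z}) - {a..b}))"
    by (rule negligible_subset[of "{z}"]) auto
  have "f absolutely_integrable_on ({a..b} - {z})"
  proof (rule measurable_bounded_by_integrable_imp_absolutely_integrable)
    show "f \<in> borel_measurable (lebesgue_on ({a..b} - {z}))"
      using assms(1) by (rule continuous_imp_measurable_on_sets_lebesgue) auto
    show "(\<lambda>_. M) integrable_on ({a..b} - {z})"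
      using integrable_spike_set_eq[OF neg] integrable_const_ivl by blast
  qed (use assms(2) in auto)
  then show ?thesis
    using integrable_spike_set_eq[OF neg] absolutely_integrable_on_def by blast
qed

lemma integrable_mult_continuous_off_point:
  fixes f k :: "real \<Rightarrow> real"
  assumes f: "continuous_on ({a..b} - {z}) f" "\<forall>t\<in>{a..b} - {z}. \<bar>f t\<bar> \<le> M"
    and k: "continuous_on {a..b} k"
  shows "(\<lambda>t. f t * k t) integrable_on {a..b}"
proof -
  obtain B where B: "\<forall>t\<in>{a..b}. \<bar>k t\<bar> \<le> B"
    using compact_imp_bounded[OF compact_continuous_image[OF k compact_Icc]]
    by (auto simp: bounded_iff)
  show ?thesis
  proof (rule integrable_on_bounded_continuous_off_point)
    show "continuous_on ({a..b} - {z}) (\<lambda>t. f t * k t)"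
      by (intro continuous_intros f continuous_on_subset[OF k]) auto
    show "\<forall>t\<in>{a..b} - {z}. \<bar>f t * k t\<bar> \<le> M * B"
      using f(2) B by (auto simp: abs_mult intro: mult_mono')
  qed
qed

lemma integral_mult_kernel_approx:
  fixes f k :: "real \<Rightarrow> real"
  assumes pq: "a \<le> p" "q \<le> b"
    and f: "continuous_on ({a..b} - {z}) f" "\<forall>t\<in>{a..b} - {z}. \<bar>f t\<bar> \<le> M"
    and f_near: "\<forall>t\<in>{p..q} - {z}. \<bar>f t - v\<bar> \<le> L"
    and k: "continuous_on {a..b} k" "\<forall>t\<in>{a..b}. 0 \<le> k t"
    and k_mass: "(k has_integral 1) {p..q}" "(k has_integral K) {a..b}"
  shows "\<bar>integral {a..b} (\<lambda>t. f t * k t) - v\<bar> \<le> L + M * (K - 1)"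
proof -
  define k_near where "k_near t = (if t \<in> {p..q} then k t else 0)" for t
  define h where "h t = f t * k t - v * k_near t" for t
  define bound where "bound t = M * k t - (M - L) * k_near t" for t
  have near: "(k_near has_integral 1) {a..b}"
    unfolding k_near_def using has_integral_restrict_closed_subinterval[of k 1 p q a b] k_mass pq
    by simp
  have fk: "(\<lambda>t. f t * k t) integrable_on {a..b}"
    by (rule integrable_mult_continuous_off_point[OF f k(1)])
  have "(h has_integral integral {a..b} (\<lambda>t. f t * k t) - v) {a..b}"
    unfolding h_def
    using has_integral_diff[OF integrable_integral[OF fk] has_integral_mult_right[OF near]] by simp
  then have h: "(h has_integral integral {a..b} (\<lambda>t. f t * k t) - v) ({a..b} - {z})"
    by (simp add: has_integral_Diff_singleton_iff)
  have "(bound has_integral M * K - (M - L) * 1) {a..b}"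
    unfolding bound_def
    using has_integral_diff[OF has_integral_mult_right[OF k_mass(2)] has_integral_mult_right[OF near]] .
  then have bound: "(bound has_integral L + M * (K - 1)) ({a..b} - {z})"
    by (simp add: has_integral_Diff_singleton_iff algebra_simps)
  have "norm (integral ({a..b} - {z}) h) \<le> integral ({a..b} - {z}) bound"
  proof (rule integral_norm_bound_integral)
    fix t assume t: "t \<in> {a..b} - {z}"
    show "norm (h t) \<le> bound t"
    proof (cases "t \<in> {p..q}")
      case True
      then have "norm (h t) = \<bar>f t - v\<bar> * k t"
        using k(2) t by (simp add: h_def k_near_def abs_mult flip: left_diff_distrib)
      also have "\<dots> \<le> L * k t"
        using True f_near k(2) t by (intro mult_right_mono) auto
      also have "\<dots> = bound t"
        using True by (simp add: bound_def k_near_def algebra_simps)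
      finally show ?thesis .
    next
      case False
      then have "k_near t = 0"
        unfolding k_near_def by auto
      moreover have "\<bar>f t\<bar> * k t \<le> M * k t"
        using f(2) k(2) t by (intro mult_right_mono) auto
      ultimately show ?thesis
        using k(2) t by (simp add: h_def bound_def abs_mult)
    qed
  qed (use h bound in blast)+
  then show ?thesis
    using h bound by (simp add: integral_unique)
qed

lemma convex_Icc_Diff_singleton:
  fixes p q z :: real
  assumes "z \<notin> {p<..<q}"
  shows "convex ({p..q} - {z})"
  unfolding is_interval_convex_1[symmetric] is_interval_1
  using assms by fastforce

lemma abs_diff_le_deriv_bound_off_point:
  fixes f f' :: "real \<Rightarrow> real"
  assumes "z \<notin> {p<..<q}"
    and "\<forall>x\<in>{p..q} - {z}. (f has_real_derivative f' x) (at x within {p..q} - {z})"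
    and "\<forall>x\<in>{p..q} - {z}. \<bar>f' x\<bar> \<le> B"
    and "s \<in> {p..q} - {z}" "t \<in> {p..q} - {z}"
  shows "\<bar>f t - f s\<bar> \<le> B * \<bar>t - s\<bar>"
  using field_differentiable_bound[OF convex_Icc_Diff_singleton[OF assms(1)], of f f' B t s] assms(2-)
  by simp

definition tanh_kernel :: "real \<Rightarrow> real \<Rightarrow> real \<Rightarrow> real" where
  "tanh_kernel a c t = a * (1 - (tanh (a * (t - c)))\<^sup>2)"

lemma has_real_derivative_tanh_shift:
  "((\<lambda>t. tanh (a * (t - c))) has_real_derivative tanh_kernel a c t) (at t)"
  unfolding tanh_kernel_def by (auto intro!: derivative_eq_intros simp: algebra_simps)

lemma continuous_on_tanh_kernel: "continuous_on S (tanh_kernel a c)"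
  unfolding tanh_kernel_def by (intro continuous_intros) (metis cosh_real_pos less_irrefl)

lemma tanh_kernel_nonneg:
  assumes "0 \<le> a"
  shows "0 \<le> tanh_kernel a c t"
proof -
  have "\<bar>tanh (a * (t - c))\<bar> \<le> 1"
    using tanh_real_bounds[of "a * (t - c)"] by auto
  then show ?thesis
    using assms by (simp add: tanh_kernel_def abs_square_le_1)
qed

lemma tanh_kernel_has_integral:
  assumes "x \<le> y"
  shows "(tanh_kernel a c has_integral tanh (a * (y - c)) - tanh (a * (x - c))) {x..y}"
  using assms has_real_derivative_tanh_shift
  by (intro fundamental_theorem_of_calculus)
     (auto simp: has_real_derivative_iff_has_vector_derivative[symmetric]
           intro: has_field_derivative_at_within)

lemma deriv_chi:
  "deriv (chi T \<delta>) t = gamma_par \<delta> *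
     (tanh_kernel (alpha_par \<delta>) (2 * \<delta>) t - tanh_kernel (alpha_par \<delta>) (T - 2 * \<delta>) t)"
proof -
  have "chi T \<delta> = (\<lambda>t. gamma_par \<delta> *
      (tanh (alpha_par \<delta> * (t - 2 * \<delta>)) - tanh (alpha_par \<delta> * (t - (T - 2 * \<delta>)))))"
    by (simp add: chi_def fun_eq_iff algebra_simps)
  then show ?thesis
    by (auto intro!: DERIV_imp_deriv DERIV_cmult DERIV_diff has_real_derivative_tanh_shift)
qed

lemma alpha_par_mult_self:
  assumes "0 < \<delta>"
  shows "alpha_par \<delta> * \<delta> = 3 * ln (1 / \<delta>)"
  using assms by (simp add: alpha_par_def ln_div ln_realpow)

lemma alpha_par_pos:
  assumes "0 < \<delta>" "\<delta> < 1"
  shows "0 < alpha_par \<delta>"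
proof -
  have "0 < alpha_par \<delta> * \<delta>"
    using assms by (simp add: alpha_par_mult_self)
  then show ?thesis
    using assms by (simp add: zero_less_mult_iff)
qed

lemma tanh_alpha_par_mult_self:
  assumes "0 < \<delta>"
  shows "tanh (alpha_par \<delta> * \<delta>) = (1 - \<delta> ^ 6) / (1 + \<delta> ^ 6)"
proof -
  have "- 2 * (alpha_par \<delta> * \<delta>) = ln (\<delta> ^ 6)"
    using assms by (simp add: alpha_par_mult_self ln_div ln_realpow)
  then have "exp (- 2 * (alpha_par \<delta> * \<delta>)) = \<delta> ^ 6"
    using assms by simp
  then show ?thesis
    by (simp add: tanh_real_altdef del: exp_minus)
qed

lemma gamma_par_eq:
  assumes "0 < \<delta>" "\<delta> < 1"
  shows "2 * gamma_par \<delta> = (1 + \<delta> ^ 6) / (1 - \<delta> ^ 6)"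
proof -
  have "0 < 1 + \<delta> ^ 6" "\<delta> ^ 6 < 1"
    using assms by (simp_all add: add_pos_pos power_less_one_iff)
  then show ?thesis
    unfolding gamma_par_def tanh_alpha_par_mult_self[OF assms(1)] by (simp add: field_simps)
qed

lemma gamma_par_mult_tanh:
  assumes "0 < \<delta>" "\<delta> < 1"
  shows "2 * gamma_par \<delta> * tanh (alpha_par \<delta> * \<delta>) = 1"
proof -
  have "0 < 1 + \<delta> ^ 6" "\<delta> ^ 6 < 1"
    using assms by (simp_all add: add_pos_pos power_less_one_iff)
  then show ?thesis
    unfolding gamma_par_eq[OF assms] tanh_alpha_par_mult_self[OF assms(1)] by simp
qed

lemma gamma_par_excess:
  assumes "0 < \<delta>" "\<delta> < 1"
  shows "2 * gamma_par \<delta> - 1 = 2 * \<delta> ^ 6 / (1 - \<delta> ^ 6)"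
proof -
  have "\<delta> ^ 6 < 1"
    using assms by (simp add: power_less_one_iff)
  then show ?thesis
    unfolding gamma_par_eq[OF assms] by (simp add: field_simps)
qed

lemma integral_mult_tanh_kernel_approx:
  fixes f f' :: "real \<Rightarrow> real"
  assumes \<delta>: "0 < \<delta>" and c: "a \<le> c - \<delta>" "c + \<delta> \<le> b" and z: "z \<notin> {c - \<delta><..<c + \<delta>}"
    and \<alpha>: "0 \<le> \<alpha>" and \<gamma>: "2 * \<gamma> * tanh (\<alpha> * \<delta>) = 1"
    and f: "\<forall>t\<in>{a..b} - {z}. (f has_real_derivative f' t) (at t within {a..b} - {z})"
      "\<forall>t\<in>{a..b} - {z}. \<bar>f t\<bar> \<le> M"
    and f': "\<forall>t\<in>{c - \<delta>..c + \<delta>} - {z}. \<bar>f' t\<bar> \<le> M'"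
  shows "\<bar>integral {a..b} (\<lambda>t. f t * (\<gamma> * tanh_kernel \<alpha> c t)) - f c\<bar>
    \<le> M' * \<delta> + M * (2 * \<gamma> - 1)"
proof -
  define K where "K = \<gamma> * (tanh (\<alpha> * (b - c)) - tanh (\<alpha> * (a - c)))"
  have "0 \<le> tanh (\<alpha> * \<delta>)"
    using \<alpha> \<delta> by simp
  then have "0 \<le> \<gamma>"
    using \<gamma> mult_nonpos_nonneg[of "2 * \<gamma>" "tanh (\<alpha> * \<delta>)"] by fastforce
  have c_window: "c \<in> {c - \<delta>..c + \<delta>} - {z}"
    using \<delta> z by auto
  then have "M \<ge> 0" "M' \<ge> 0"
    using c f(2) f' by (meson Diff_iff atLeastAtMost_iff abs_ge_zero order_trans)+
  have "\<forall>t\<in>{c - \<delta>..c + \<delta>} - {z}. \<bar>f t - f c\<bar> \<le> M' * \<delta>"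
  proof
    fix t assume t: "t \<in> {c - \<delta>..c + \<delta>} - {z}"
    have "\<forall>x\<in>{c - \<delta>..c + \<delta>} - {z}.
        (f has_real_derivative f' x) (at x within {c - \<delta>..c + \<delta>} - {z})"
      using c by (auto intro!: DERIV_subset[OF f(1)[rule_format]])
    then have "\<bar>f t - f c\<bar> \<le> M' * \<bar>t - c\<bar>"
      using abs_diff_le_deriv_bound_off_point[OF z _ f' c_window t] by blast
    also have "\<dots> \<le> M' * \<delta>"
      using t \<open>M' \<ge> 0\<close> by (intro mult_left_mono) auto
    finally show "\<bar>f t - f c\<bar> \<le> M' * \<delta>" .
  qed
  moreover have "((\<lambda>t. \<gamma> * tanh_kernel \<alpha> c t) has_integral 1) {c - \<delta>..c + \<delta>}"
    using has_integral_mult_right[OF tanh_kernel_has_integral, of "c - \<delta>" "c + \<delta>" \<gamma> \<alpha> c] \<delta> \<gamma>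
    by (simp add: algebra_simps)
  moreover have "((\<lambda>t. \<gamma> * tanh_kernel \<alpha> c t) has_integral K) {a..b}"
    unfolding K_def using c \<delta> by (intro has_integral_mult_right tanh_kernel_has_integral) auto
  ultimately have "\<bar>integral {a..b} (\<lambda>t. f t * (\<gamma> * tanh_kernel \<alpha> c t)) - f c\<bar>
      \<le> M' * \<delta> + M * (K - 1)"
    using c \<delta> f(2) DERIV_continuous_on[OF f(1)[rule_format]]
      continuous_on_tanh_kernel tanh_kernel_nonneg[OF \<alpha>] \<open>0 \<le> \<gamma>\<close>
    by (intro integral_mult_kernel_approx[where p = "c - \<delta>" and q = "c + \<delta>" and z = z])
       (auto intro!: continuous_intros)
  also have "\<dots> \<le> M' * \<delta> + M * (2 * \<gamma> - 1)"
  proof -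
    have "tanh (\<alpha> * (b - c)) - tanh (\<alpha> * (a - c)) \<le> 2"
      using tanh_real_bounds[of "\<alpha> * (b - c)"] tanh_real_bounds[of "\<alpha> * (a - c)"] by auto
    then have "K \<le> 2 * \<gamma>"
      unfolding K_def using \<open>0 \<le> \<gamma>\<close> by (simp add: mult_left_mono mult.commute)
    then show ?thesis
      using \<open>M \<ge> 0\<close> by (simp add: mult_left_mono)
  qed
  finally show ?thesis .
qed

lemma tanh_cutoff_error_le:
  fixes \<delta> T M M' :: real
  assumes "0 < \<delta>" "\<delta> < 1" "2 * \<delta> \<le> T" "0 \<le> M" "0 \<le> M'"
  shows "2 * (M' * \<delta> + M * (2 * \<delta> ^ 6 / (1 - \<delta> ^ 6)))
    \<le> (T * M + 3 * ln (1 / \<delta>) * M') * (4 * \<delta> / (1 - \<delta>))"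
proof -
  have "\<delta> ^ 6 \<le> \<delta> ^ 2"
    using power_decreasing[of 2 6 \<delta>] assms(1,2) by simp
  also have "\<dots> \<le> T * \<delta>"
    using assms(1,3) by (simp add: power2_eq_square)
  finally have "\<delta> ^ 6 \<le> T * \<delta>" .
  moreover have "\<delta> ^ 6 \<le> \<delta>"
    using power_decreasing[of 1 6 \<delta>] assms(1,2) by simp
  ultimately have "2 * \<delta> ^ 6 / (1 - \<delta> ^ 6) \<le> 2 * (T * \<delta>) / (1 - \<delta>)"
    using assms by (intro frac_le) auto
  then have leak: "M * (2 * \<delta> ^ 6 / (1 - \<delta> ^ 6)) \<le> M * (2 * T * \<delta> / (1 - \<delta>))"
    using assms(4) by (intro mult_left_mono) auto
  have "1 - \<delta> \<le> ln (1 / \<delta>)"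
    using ln_le_minus_one[OF assms(1)] assms(1) by (simp add: ln_div)
  then have "\<delta> * (1 - \<delta>) \<le> \<delta> * (6 * ln (1 / \<delta>))"
    using assms(1,2) by (intro mult_left_mono) auto
  then have "\<delta> \<le> 6 * ln (1 / \<delta>) * \<delta> / (1 - \<delta>)"
    using assms(2) by (simp add: field_simps)
  then have window: "M' * \<delta> \<le> M' * (6 * ln (1 / \<delta>) * \<delta> / (1 - \<delta>))"
    using assms(5) by (rule mult_left_mono)
  have "2 * (M' * \<delta> + M * (2 * \<delta> ^ 6 / (1 - \<delta> ^ 6)))
      \<le> 2 * (M' * (6 * ln (1 / \<delta>) * \<delta> / (1 - \<delta>)) + M * (2 * T * \<delta> / (1 - \<delta>)))"
    using add_mono[OF window leak] by (rule mult_left_mono) simp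
  also have "\<dots> = (T * M + 3 * ln (1 / \<delta>) * M') * (4 * \<delta> / (1 - \<delta>))"
    using assms(2) by (simp add: divide_simps) algebra
  finally show ?thesis .
qed

lemma abs_le_sup_norm_on: "t \<in> S \<Longrightarrow> ereal \<bar>g t\<bar> \<le> sup_norm_on S g"
  unfolding sup_norm_on_def by (rule SUP_upper)

lemma abs_le_of_sup_norm_on_eq:
  assumes "sup_norm_on S g = ereal M" "t \<in> S"
  shows "\<bar>g t\<bar> \<le> M"
  using abs_le_sup_norm_on[OF assms(2), of g] assms(1) by simp

lemma sup_norm_on_nonneg: "t \<in> S \<Longrightarrow> 0 \<le> sup_norm_on S g"
  using abs_le_sup_norm_on[of t S g] by (meson abs_ge_zero ereal_less_eq(5) order_trans)

lemma ereal_le_weighted_norms: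
  fixes x A B C :: real and N1 N2 :: ereal
  assumes "0 < A" "0 < B" "0 < C" "0 \<le> N1" "0 \<le> N2"
    and "\<And>M1 M2. N1 = ereal M1 \<Longrightarrow> N2 = ereal M2 \<Longrightarrow> x \<le> (A * M1 + B * M2) * C"
  shows "ereal x \<le> (ereal A * N1 + ereal B * N2) * ereal C"
  using assms by (cases N1; cases N2) auto

lemma integral_mult_deriv_chi:
  assumes "continuous_on ({0..T} - {z}) f" "\<forall>t\<in>{0..T} - {z}. \<bar>f t\<bar> \<le> M"
  shows "integral {0..T} (\<lambda>t. f t * deriv (chi T \<delta>) t)
    = integral {0..T} (\<lambda>t. f t * (gamma_par \<delta> * tanh_kernel (alpha_par \<delta>) (2 * \<delta>) t))
    - integral {0..T} (\<lambda>t. f t * (gamma_par \<delta> * tanh_kernel (alpha_par \<delta>) (T - 2 * \<delta>) t))"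
  using assms
  by (simp add: deriv_chi right_diff_distrib integral_diff integrable_mult_continuous_off_point
      continuous_on_tanh_kernel continuous_on_mult_left)

lemma abs_integral_mult_deriv_chi_le:
  fixes f f' :: "real \<Rightarrow> real"
  assumes \<delta>: "0 < \<delta>" "\<delta> < 1" and z: "3 * \<delta> \<le> z" "z \<le> T - 3 * \<delta>"
    and f: "\<forall>t\<in>{0..T} - {z}. (f has_real_derivative f' t) (at t within ({0..T} - {z}))"
    and fM: "\<forall>t\<in>{0..T} - {z}. \<bar>f t\<bar> \<le> M"
    and f'M: "\<forall>t\<in>({\<delta>..3 * \<delta>} \<union> {T - 3 * \<delta>..T - \<delta>}) - {z}. \<bar>f' t\<bar> \<le> M'"
  shows "\<bar>integral {0..T} (\<lambda>t. f t * deriv (chi T \<delta>) t) - f (2 * \<delta>) + f (T - 2 * \<delta>)\<bar>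
    \<le> (T * M + 3 * ln (1 / \<delta>) * M') * (4 * \<delta> / (1 - \<delta>))"
proof -
  let ?near = "\<lambda>c. integral {0..T} (\<lambda>t. f t * (gamma_par \<delta> * tanh_kernel (alpha_par \<delta>) c t)) - f c"
  have near: "\<bar>?near c\<bar> \<le> M' * \<delta> + M * (2 * gamma_par \<delta> - 1)"
    if c: "c = 2 * \<delta> \<or> c = T - 2 * \<delta>" for c
  proof (rule integral_mult_tanh_kernel_approx)
    show "0 \<le> c - \<delta>" "c + \<delta> \<le> T" "z \<notin> {c - \<delta><..<c + \<delta>}"
      using c z \<delta> by auto
    show "\<forall>t\<in>{c - \<delta>..c + \<delta>} - {z}. \<bar>f' t\<bar> \<le> M'"
      using c f'M by auto
  qed (use \<delta> f fM gamma_par_mult_tanh[OF \<delta>] alpha_par_pos[OF \<delta>] in auto)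
  have "\<delta> \<in> {0..T} - {z}" "\<delta> \<in> ({\<delta>..3 * \<delta>} \<union> {T - 3 * \<delta>..T - \<delta>}) - {z}"
    using z \<delta> by auto
  then have "0 \<le> M" "0 \<le> M'"
    using fM f'M by (meson abs_ge_zero order_trans)+
  have "integral {0..T} (\<lambda>t. f t * deriv (chi T \<delta>) t) - f (2 * \<delta>) + f (T - 2 * \<delta>)
      = ?near (2 * \<delta>) - ?near (T - 2 * \<delta>)"
    using integral_mult_deriv_chi[OF DERIV_continuous_on[OF f[rule_format]] fM] by simp
  then have "\<bar>integral {0..T} (\<lambda>t. f t * deriv (chi T \<delta>) t) - f (2 * \<delta>) + f (T - 2 * \<delta>)\<bar>
      \<le> \<bar>?near (2 * \<delta>)\<bar> + \<bar>?near (T - 2 * \<delta>)\<bar>"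
    using abs_triangle_ineq4[of "?near (2 * \<delta>)" "?near (T - 2 * \<delta>)"] by simp
  also have "\<dots> \<le> 2 * (M' * \<delta> + M * (2 * \<delta> ^ 6 / (1 - \<delta> ^ 6)))"
    using near[of "2 * \<delta>"] near[of "T - 2 * \<delta>"] gamma_par_excess[OF \<delta>] by simp
  also have "\<dots> \<le> (T * M + 3 * ln (1 / \<delta>) * M') * (4 * \<delta> / (1 - \<delta>))"
    using \<delta> z \<open>0 \<le> M\<close> \<open>0 \<le> M'\<close> by (intro tanh_cutoff_error_le) auto
  finally show ?thesis .
qed

theorem lemmaA3:
  fixes T \<delta> z :: real and f f' :: "real \<Rightarrow> real"
  assumes "T > 0"
    and "0 < \<delta>" and "\<delta> < min 1 (T / 2)"
    and "3 * \<delta> \<le> z" and "z \<le> T - 3 * \<delta>"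
    and "\<forall>t\<in>{0..T} - {z}. (f has_real_derivative f' t) (at t within ({0..T} - {z}))"
    and "continuous_on ({0..T} - {z}) f'"
  shows "ereal \<bar>integral {0..T} (\<lambda>t. f t * deriv (chi T \<delta>) t) - f (2 * \<delta>) + f (T - 2 * \<delta>)\<bar>
         \<le> (ereal T * sup_norm_on ({0..T} - {z}) f
            + ereal (3 * ln (1 / \<delta>)) * sup_norm_on (({\<delta>..3 * \<delta>} \<union> {T - 3 * \<delta>..T - \<delta>}) - {z}) f')
           * ereal (4 * \<delta> / (1 - \<delta>))"
proof (rule ereal_le_weighted_norms)
  have \<delta>: "0 < \<delta>" "\<delta> < 1"
    using assms(2,3) by auto
  show "0 < T" "0 < 3 * ln (1 / \<delta>)" "0 < 4 * \<delta> / (1 - \<delta>)"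
    using assms(1) \<delta> by auto
  show "0 \<le> sup_norm_on ({0..T} - {z}) f"
    "0 \<le> sup_norm_on (({\<delta>..3 * \<delta>} \<union> {T - 3 * \<delta>..T - \<delta>}) - {z}) f'"
    using assms(3,4) \<delta> by (auto intro: sup_norm_on_nonneg[of \<delta>])
  fix M M'
  assume M: "sup_norm_on ({0..T} - {z}) f = ereal M"
    and M': "sup_norm_on (({\<delta>..3 * \<delta>} \<union> {T - 3 * \<delta>..T - \<delta>}) - {z}) f' = ereal M'"
  show "\<bar>integral {0..T} (\<lambda>t. f t * deriv (chi T \<delta>) t) - f (2 * \<delta>) + f (T - 2 * \<delta>)\<bar>
      \<le> (T * M + 3 * ln (1 / \<delta>) * M') * (4 * \<delta> / (1 - \<delta>))"
    by (rule abs_integral_mult_deriv_chi_le[OF \<delta> assms(4,5,6)])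
       (auto intro: abs_le_of_sup_norm_on_eq[OF M] abs_le_of_sup_norm_on_eq[OF M'])
qed

end
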